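(* Let $\mathbf{M}$ be a right proper model category and let $f:X\to Y$ be a weak equivalence in $\mathbf{M}$. Then the function $f_\ast:\pi_0(\mathbf{Triv}/X)\to\pi_0(\mathbf{Triv}/Y)$, induced by sending an object $W\to X$ to the composite $W\to X\xrightarrow{f}Y$, is a bijection.
   Context: For an object $X$ of $\mathbf{M}$ with terminal object $\ast$, $\mathbf{Triv}/X$ is the category whose objects are morphisms $W\to X$ such that $W\to\ast$ is a weak equivalence, and whose morphisms are commutative triangles over $X$; $\pi_0$ denotes the set of path components. Right proper means weak equivalences are stable under pullback along fibrations. *)

theory Defs
  imports Main
begin

record ('o, 'a) category =
  Obj  :: "'o set"
  Arr  :: "'a set"
  Dom  :: "'a \<Rightarrow> 'o"
  Cod  :: "'a \<Rightarrow> 'o"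
  Id   :: "'o \<Rightarrow> 'a"
  Comp :: "'a \<Rightarrow> 'a \<Rightarrow> 'a"   (* Comp C g f = g \<circ> f, defined when Cod f = Dom g *)

definition hom :: "('o, 'a) category \<Rightarrow> 'o \<Rightarrow> 'o \<Rightarrow> 'a set" where
  "hom C A B = {a \<in> Arr C. Dom C a = A \<and> Cod C a = B}"

definition is_category :: "('o, 'a) category \<Rightarrow> bool" where
  "is_category C \<longleftrightarrow>
     (\<forall>a\<in>Arr C. Dom C a \<in> Obj C \<and> Cod C a \<in> Obj C) \<and>
     (\<forall>A\<in>Obj C. Id C A \<in> hom C A A) \<and>
     (\<forall>f\<in>Arr C. \<forall>g\<in>Arr C. Cod C f = Dom C g \<longrightarrow> Comp C g f \<in> hom C (Dom C f) (Cod C g)) \<and>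
     (\<forall>f\<in>Arr C. \<forall>g\<in>Arr C. \<forall>h\<in>Arr C. Cod C f = Dom C g \<longrightarrow> Cod C g = Dom C h \<longrightarrow>
         Comp C h (Comp C g f) = Comp C (Comp C h g) f) \<and>
     (\<forall>f\<in>Arr C. Comp C (Id C (Cod C f)) f = f \<and> Comp C f (Id C (Dom C f)) = f)"

definition is_terminal :: "('o, 'a) category \<Rightarrow> 'o \<Rightarrow> bool" where
  "is_terminal C T \<longleftrightarrow> T \<in> Obj C \<and> (\<forall>A\<in>Obj C. \<exists>!t. t \<in> hom C A T)"

definition is_initial :: "('o, 'a) category \<Rightarrow> 'o \<Rightarrow> bool" where
  "is_initial C I \<longleftrightarrow> I \<in> Obj C \<and> (\<forall>A\<in>Obj C. \<exists>!t. t \<in> hom C I A)"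

text \<open>Commutative square: q ; g = p ; f, i.e.
  P --q--> E,  P --p--> A,  E --g--> B,  A --f--> B  with g \<circ> q = f \<circ> p.\<close>
definition comm_square :: "('o, 'a) category \<Rightarrow> 'a \<Rightarrow> 'a \<Rightarrow> 'a \<Rightarrow> 'a \<Rightarrow> bool" where
  "comm_square C q p g f \<longleftrightarrow>
     q \<in> Arr C \<and> p \<in> Arr C \<and> g \<in> Arr C \<and> f \<in> Arr C \<and>
     Dom C q = Dom C p \<and> Cod C q = Dom C g \<and> Cod C p = Dom C f \<and> Cod C g = Cod C f \<and>
     Comp C g q = Comp C f p"

definition is_pullback :: "('o, 'a) category \<Rightarrow> 'a \<Rightarrow> 'a \<Rightarrow> 'a \<Rightarrow> 'a \<Rightarrow> bool" where
  "is_pullback C q p g f \<longleftrightarrow> comm_square C q p g f \<and>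
     (\<forall>q' p'. comm_square C q' p' g f \<longrightarrow>
        (\<exists>!u. u \<in> hom C (Dom C q') (Dom C q) \<and> Comp C q u = q' \<and> Comp C p u = p'))"

definition is_pushout :: "('o, 'a) category \<Rightarrow> 'a \<Rightarrow> 'a \<Rightarrow> 'a \<Rightarrow> 'a \<Rightarrow> bool" where
  "is_pushout C q p g f \<longleftrightarrow> comm_square C q p g f \<and>
     (\<forall>g' f'. comm_square C q p g' f' \<longrightarrow>
        (\<exists>!u. u \<in> hom C (Cod C g) (Cod C g') \<and> Comp C u g = g' \<and> Comp C u f = f'))"

definition has_finite_limits :: "('o, 'a) category \<Rightarrow> bool" where
  "has_finite_limits C \<longleftrightarrow> (\<exists>T. is_terminal C T) \<and>
     (\<forall>g\<in>Arr C. \<forall>f\<in>Arr C. Cod C g = Cod C f \<longrightarrow> (\<exists>q p. is_pullback C q p g f))"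

definition has_finite_colimits :: "('o, 'a) category \<Rightarrow> bool" where
  "has_finite_colimits C \<longleftrightarrow> (\<exists>I. is_initial C I) \<and>
     (\<forall>q\<in>Arr C. \<forall>p\<in>Arr C. Dom C q = Dom C p \<longrightarrow> (\<exists>g f. is_pushout C q p g f))"

definition is_retract :: "('o, 'a) category \<Rightarrow> 'a \<Rightarrow> 'a \<Rightarrow> bool" where
  "is_retract C f g \<longleftrightarrow> f \<in> Arr C \<and> g \<in> Arr C \<and>
     (\<exists>i r i' r'. i \<in> hom C (Dom C f) (Dom C g) \<and> r \<in> hom C (Dom C g) (Dom C f) \<and>
        i' \<in> hom C (Cod C f) (Cod C g) \<and> r' \<in> hom C (Cod C g) (Cod C f) \<and>
        Comp C r i = Id C (Dom C f) \<and> Comp C r' i' = Id C (Cod C f) \<and>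
        Comp C g i = Comp C i' f \<and> Comp C f r = Comp C r' g)"

definition has_llp :: "('o, 'a) category \<Rightarrow> 'a \<Rightarrow> 'a \<Rightarrow> bool" where
  "has_llp C i p \<longleftrightarrow>
     (\<forall>u v. u \<in> hom C (Dom C i) (Dom C p) \<longrightarrow> v \<in> hom C (Cod C i) (Cod C p) \<longrightarrow>
        Comp C p u = Comp C v i \<longrightarrow>
        (\<exists>h. h \<in> hom C (Cod C i) (Dom C p) \<and> Comp C h i = u \<and> Comp C p h = v))"

definition model_category ::
  "('o, 'a) category \<Rightarrow> 'a set \<Rightarrow> 'a set \<Rightarrow> 'a set \<Rightarrow> bool" where
  "model_category C W Cof Fib \<longleftrightarrow>
     is_category C \<and>
     W \<subseteq> Arr C \<and> Cof \<subseteq> Arr C \<and> Fib \<subseteq> Arr C \<and>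
     \<comment> \<open>each class contains identities and is closed under composition\<close>
     (\<forall>K\<in>{W, Cof, Fib}. (\<forall>A\<in>Obj C. Id C A \<in> K) \<and>
        (\<forall>f\<in>K. \<forall>g\<in>K. Cod C f = Dom C g \<longrightarrow> Comp C g f \<in> K)) \<and>
     \<comment> \<open>MC1: finite limits and colimits\<close>
     has_finite_limits C \<and> has_finite_colimits C \<and>
     \<comment> \<open>MC2: two-out-of-three\<close>
     (\<forall>f\<in>Arr C. \<forall>g\<in>Arr C. Cod C f = Dom C g \<longrightarrow>
        ((f \<in> W \<and> g \<in> W \<longrightarrow> Comp C g f \<in> W) \<and>
         (f \<in> W \<and> Comp C g f \<in> W \<longrightarrow> g \<in> W) \<and>
         (g \<in> W \<and> Comp C g f \<in> W \<longrightarrow> f \<in> W))) \<and>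
     \<comment> \<open>MC3: retracts\<close>
     (\<forall>K\<in>{W, Cof, Fib}. \<forall>f g. is_retract C f g \<longrightarrow> g \<in> K \<longrightarrow> f \<in> K) \<and>
     \<comment> \<open>MC4: lifting\<close>
     (\<forall>i\<in>Cof \<inter> W. \<forall>p\<in>Fib. has_llp C i p) \<and>
     (\<forall>i\<in>Cof. \<forall>p\<in>Fib \<inter> W. has_llp C i p) \<and>
     \<comment> \<open>MC5: factorizations\<close>
     (\<forall>f\<in>Arr C. \<exists>i p. i \<in> Cof \<inter> W \<and> p \<in> Fib \<and> Cod C i = Dom C p \<and> f = Comp C p i) \<and>
     (\<forall>f\<in>Arr C. \<exists>i p. i \<in> Cof \<and> p \<in> Fib \<inter> W \<and> Cod C i = Dom C p \<and> f = Comp C p i)"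

text \<open>Right proper: in a pullback square (q, p', p, g) with p a fibration and g a weak
  equivalence, the base change q of g along p is a weak equivalence.
  Square: P --q--> E, P --p'--> B', E --p--> B, B' --g--> B.\<close>
definition right_proper ::
  "('o, 'a) category \<Rightarrow> 'a set \<Rightarrow> 'a set \<Rightarrow> 'a set \<Rightarrow> bool" where
  "right_proper C W Cof Fib \<longleftrightarrow> model_category C W Cof Fib \<and>
     (\<forall>q p' p g. is_pullback C p' q g p \<longrightarrow> p \<in> Fib \<longrightarrow> g \<in> W \<longrightarrow> q \<in> W)"

text \<open>Objects of Triv/X (T a chosen terminal object): arrows w : V \<rightarrow> X such that
  the unique arrow V \<rightarrow> T is a weak equivalence.\<close>
definition triv_objs :: "('o, 'a) category \<Rightarrow> 'a set \<Rightarrow> 'o \<Rightarrow> 'o \<Rightarrow> 'a set" where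
  "triv_objs C W T X = {w \<in> Arr C. Cod C w = X \<and> (\<forall>t\<in>hom C (Dom C w) T. t \<in> W)}"

definition triv_hom_rel :: "('o, 'a) category \<Rightarrow> 'a set \<Rightarrow> 'o \<Rightarrow> 'o \<Rightarrow> 'a rel" where
  "triv_hom_rel C W T X = {(w, w'). w \<in> triv_objs C W T X \<and> w' \<in> triv_objs C W T X \<and>
      (\<exists>a. a \<in> hom C (Dom C w) (Dom C w') \<and> Comp C w' a = w)}"

definition conn_rel :: "('o, 'a) category \<Rightarrow> 'a set \<Rightarrow> 'o \<Rightarrow> 'o \<Rightarrow> 'a rel" where
  "conn_rel C W T X = (triv_hom_rel C W T X \<union> (triv_hom_rel C W T X)\<inverse>)\<^sup>*"

definition pi0_triv :: "('o, 'a) category \<Rightarrow> 'a set \<Rightarrow> 'o \<Rightarrow> 'o \<Rightarrow> 'a set set" where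
  "pi0_triv C W T X = triv_objs C W T X // conn_rel C W T X"

definition pi0_push :: "('o, 'a) category \<Rightarrow> 'a set \<Rightarrow> 'o \<Rightarrow> 'o \<Rightarrow> 'a \<Rightarrow> 'a set \<Rightarrow> 'a set" where
  "pi0_push C W T Y f c = (\<Union>w\<in>c. conn_rel C W T Y `` {Comp C f w})"

end

theory Submission
  imports Defs
begin

(* The inverse of f_* is built from fibrant replacements. Factor u : V -> Y in Triv/Y as a
   trivial cofibration followed by a fibration p : E -> Y; then E is contractible, and by right
   properness the pullback P of p along f maps to E by a weak equivalence, so P -> X lies in
   Triv/X. Every w in Triv/X for which f w factors through p maps into P, hence all such w lie
   in one component. By the lifting axiom a morphism u -> u' in Triv/Y induces a map between
   fibrant replacements over Y, so this component only depends on the component of u. *)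

lemma equiv_zigzag: "equiv UNIV ((E \<union> E\<inverse>)\<^sup>*)"
  by (simp add: equiv_def refl_rtrancl sym_rtrancl sym_Un_converse trans_rtrancl)

lemma zigzag_map:
  assumes "\<And>x y. (x, y) \<in> E \<Longrightarrow> (f x, f y) \<in> E'" and "(x, y) \<in> (E \<union> E\<inverse>)\<^sup>*"
  shows "(f x, f y) \<in> (E' \<union> E'\<inverse>)\<^sup>*"
  using assms(2)
proof (induction rule: rtrancl_induct)
  case (step y z)
  then show ?case using assms(1) by (blast intro: rtrancl_into_rtrancl)
qed simp

lemma zigzag_lift:
  assumes EB: "EB \<subseteq> B \<times> B"
    and fibre: "\<And>a a' b. a \<in> A \<Longrightarrow> a' \<in> A \<Longrightarrow> b \<in> B \<Longrightarrow> over a b \<Longrightarrow> over a' b \<Longrightarrow>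
                  (a, a') \<in> (EA \<union> EA\<inverse>)\<^sup>*"
    and exists: "\<And>b. b \<in> B \<Longrightarrow> \<exists>a\<in>A. over a b"
    and along_edge: "\<And>a b b'. (b, b') \<in> EB \<Longrightarrow> over a b \<Longrightarrow> over a b'"
    and path: "(b, b') \<in> (EB \<union> EB\<inverse>)\<^sup>*" and b: "b \<in> B"
    and a: "a \<in> A" "over a b" and a': "a' \<in> A" "over a' b'"
  shows "(a, a') \<in> (EA \<union> EA\<inverse>)\<^sup>*"
  using path a'
proof (induction arbitrary: a' rule: rtrancl_induct)
  case base
  show ?case using fibre[OF a(1) base(1) b a(2) base(2)] .
next
  case (step y z)
  from step.hyps(2) EB have "y \<in> B" "z \<in> B" by auto
  then obtain a'' where a'': "a'' \<in> A" "over a'' y" using exists by blast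
  have "(a, a'') \<in> (EA \<union> EA\<inverse>)\<^sup>*" using step.IH[OF a''] .
  moreover have "(a'', a') \<in> (EA \<union> EA\<inverse>)\<^sup>*"
  proof (cases "(y, z) \<in> EB")
    case True
    from fibre[OF a''(1) step.prems(1) \<open>z \<in> B\<close> along_edge[OF True a''(2)] step.prems(2)]
    show ?thesis .
  next
    case False
    then have "(z, y) \<in> EB" using step.hyps(2) by blast
    from fibre[OF a''(1) step.prems(1) \<open>y \<in> B\<close> a''(2) along_edge[OF this step.prems(2)]]
    show ?thesis .
  qed
  ultimately show ?case by (rule rtrancl_trans)
qed

lemma bij_betw_zigzag_components:
  fixes EA :: "'a rel" and EB :: "'b rel" and \<phi> :: "'a \<Rightarrow> 'b" and over :: "'a \<Rightarrow> 'b \<Rightarrow> bool"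
  defines "R \<equiv> (EA \<union> EA\<inverse>)\<^sup>*" and "S \<equiv> (EB \<union> EB\<inverse>)\<^sup>*"
  assumes EB: "EB \<subseteq> B \<times> B" and \<phi>_into: "\<phi> ` A \<subseteq> B"
    and \<phi>_edge: "\<And>a a'. (a, a') \<in> EA \<Longrightarrow> (\<phi> a, \<phi> a') \<in> EB"
    and over_\<phi>: "\<And>a. a \<in> A \<Longrightarrow> over a (\<phi> a)"
    and exists: "\<And>b. b \<in> B \<Longrightarrow> \<exists>a\<in>A. over a b"
    and over_conn: "\<And>a b. a \<in> A \<Longrightarrow> b \<in> B \<Longrightarrow> over a b \<Longrightarrow> (\<phi> a, b) \<in> S"
    and fibre: "\<And>a a' b. a \<in> A \<Longrightarrow> a' \<in> A \<Longrightarrow> b \<in> B \<Longrightarrow> over a b \<Longrightarrow> over a' b \<Longrightarrow> (a, a') \<in> R"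
    and along_edge: "\<And>a b b'. (b, b') \<in> EB \<Longrightarrow> over a b \<Longrightarrow> over a b'"
  shows "bij_betw (\<lambda>c. \<Union>a\<in>c. S `` {\<phi> a}) (A // R) (B // S)"
proof -
  have R: "equiv UNIV R" and S: "equiv UNIV S"
    unfolding R_def S_def by (rule equiv_zigzag)+
  have R_iff: "R `` {a} = R `` {a'} \<longleftrightarrow> (a, a') \<in> R" for a a'
    using eq_equiv_class_iff[OF R UNIV_I UNIV_I] .
  have S_iff: "S `` {b} = S `` {b'} \<longleftrightarrow> (b, b') \<in> S" for b b'
    using eq_equiv_class_iff[OF S UNIV_I UNIV_I] .
  have "(\<phi> a, \<phi> a') \<in> S" if "(a, a') \<in> R" for a a'
    using zigzag_map[of EA \<phi> EB] \<phi>_edge that unfolding R_def S_def by metis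
  then have "(\<lambda>a. S `` {\<phi> a}) respects R"
    by (intro congruentI) (simp add: S_iff)
  then have push: "(\<Union>a'\<in>R `` {a}. S `` {\<phi> a'}) = S `` {\<phi> a}" for a
    using UN_equiv_class[OF R] by blast
  have lift: "(a, a') \<in> R" if "a \<in> A" "a' \<in> A" "(\<phi> a, \<phi> a') \<in> S" for a a'
  proof -
    have "\<phi> a \<in> B" using \<phi>_into that(1) by blast
    from zigzag_lift[OF EB fibre[unfolded R_def] exists along_edge that(3)[unfolded S_def] this
        that(1) over_\<phi>[OF that(1)] that(2) over_\<phi>[OF that(2)]]
    show ?thesis unfolding R_def .
  qed
  then have "inj_on (\<lambda>c. \<Union>a\<in>c. S `` {\<phi> a}) (A // R)"
  proof (intro inj_onI)
    fix c c' assume "c \<in> A // R" "c' \<in> A // R"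
      and "(\<Union>a\<in>c. S `` {\<phi> a}) = (\<Union>a\<in>c'. S `` {\<phi> a})"
    moreover obtain a a' where "a \<in> A" "c = R `` {a}" "a' \<in> A" "c' = R `` {a'}"
      using \<open>c \<in> A // R\<close> \<open>c' \<in> A // R\<close> by (auto elim!: quotientE)
    ultimately show "c = c'" using lift by (simp add: push R_iff S_iff)
  qed
  moreover have "(\<lambda>c. \<Union>a\<in>c. S `` {\<phi> a}) ` (A // R) = B // S"
  proof (intro equalityI subsetI)
    fix d assume "d \<in> (\<lambda>c. \<Union>a\<in>c. S `` {\<phi> a}) ` (A // R)"
    then show "d \<in> B // S" using \<phi>_into by (auto elim!: quotientE simp: push intro!: quotientI)
  next
    fix d assume "d \<in> B // S"
    then obtain b where b: "b \<in> B" "d = S `` {b}" by (auto elim: quotientE)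
    then obtain a where a: "a \<in> A" "over a b" using exists by blast
    have "S `` {\<phi> a} = d" using over_conn[OF a(1) b(1) a(2)] b(2) S_iff by simp
    then have "d = (\<Union>a'\<in>R `` {a}. S `` {\<phi> a'})" by (simp add: push)
    then show "d \<in> (\<lambda>c. \<Union>a\<in>c. S `` {\<phi> a}) ` (A // R)" using a by (blast intro: quotientI)
  qed
  ultimately show ?thesis unfolding bij_betw_def by blast
qed

definition factors_through :: "('o, 'a) category \<Rightarrow> 'a \<Rightarrow> 'a \<Rightarrow> bool" where
  "factors_through C g p \<longleftrightarrow> (\<exists>b\<in>hom C (Dom C g) (Dom C p). Comp C p b = g)"

lemma triv_hom_rel_iff:
  "(w, w') \<in> triv_hom_rel C W T X \<longleftrightarrow>
     w \<in> triv_objs C W T X \<and> w' \<in> triv_objs C W T X \<and> factors_through C w w'"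
  unfolding triv_hom_rel_def factors_through_def by blast

lemma triv_hom_rel_subset:
  "triv_hom_rel C W T X \<subseteq> triv_objs C W T X \<times> triv_objs C W T X"
  unfolding triv_hom_rel_def by blast

locale cat =
  fixes C :: "('o, 'a) category"
  assumes is_category: "is_category C"
begin

lemma dom_in_Obj: "a \<in> Arr C \<Longrightarrow> Dom C a \<in> Obj C"
  and cod_in_Obj: "a \<in> Arr C \<Longrightarrow> Cod C a \<in> Obj C"
  using is_category unfolding is_category_def by blast+

lemma Id_in_hom: "A \<in> Obj C \<Longrightarrow> Id C A \<in> hom C A A"
  using is_category unfolding is_category_def by blast

lemma Comp_in_hom:
  "f \<in> Arr C \<Longrightarrow> g \<in> Arr C \<Longrightarrow> Cod C f = Dom C g \<Longrightarrow> Comp C g f \<in> hom C (Dom C f) (Cod C g)"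
  using is_category unfolding is_category_def by blast

lemma
  assumes "f \<in> Arr C" "g \<in> Arr C" "Cod C f = Dom C g"
  shows Comp_in_Arr: "Comp C g f \<in> Arr C"
    and Dom_Comp: "Dom C (Comp C g f) = Dom C f"
    and Cod_Comp: "Cod C (Comp C g f) = Cod C g"
  using Comp_in_hom[OF assms] unfolding hom_def by auto

lemma Comp_assoc:
  "f \<in> Arr C \<Longrightarrow> g \<in> Arr C \<Longrightarrow> h \<in> Arr C \<Longrightarrow> Cod C f = Dom C g \<Longrightarrow> Cod C g = Dom C h \<Longrightarrow>
     Comp C h (Comp C g f) = Comp C (Comp C h g) f"
  using is_category unfolding is_category_def by blast

lemma Comp_Id_right: "f \<in> Arr C \<Longrightarrow> Comp C f (Id C (Dom C f)) = f"
  using is_category unfolding is_category_def by blast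

lemma factors_through_refl: "p \<in> Arr C \<Longrightarrow> factors_through C p p"
  unfolding factors_through_def using Id_in_hom Comp_Id_right dom_in_Obj by blast

lemma factors_through_Comp:
  "j \<in> Arr C \<Longrightarrow> p \<in> Arr C \<Longrightarrow> Cod C j = Dom C p \<Longrightarrow> factors_through C (Comp C p j) p"
  unfolding factors_through_def hom_def by (auto simp: Dom_Comp)

lemma factors_through_trans:
  assumes "factors_through C g q" "factors_through C q p" "p \<in> Arr C"
  shows "factors_through C g p"
proof -
  obtain b where b: "b \<in> hom C (Dom C g) (Dom C q)" "Comp C q b = g"
    using assms(1) unfolding factors_through_def by blast
  obtain h where h: "h \<in> hom C (Dom C q) (Dom C p)" "Comp C p h = q"
    using assms(2) unfolding factors_through_def by blast
  have "Comp C h b \<in> hom C (Dom C g) (Dom C p)"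
    using b(1) h(1) Comp_in_hom unfolding hom_def by auto
  moreover have "Comp C p (Comp C h b) = g"
    using b h assms(3) Comp_assoc unfolding hom_def by auto
  ultimately show ?thesis unfolding factors_through_def by blast
qed

lemma factors_through_Cod:
  "factors_through C g p \<Longrightarrow> p \<in> Arr C \<Longrightarrow> Cod C g = Cod C p"
  unfolding factors_through_def hom_def by (auto simp: Cod_Comp)

lemma Comp_factors_through:
  assumes "factors_through C w w'" "w' \<in> Arr C" "f \<in> Arr C" "Cod C w' = Dom C f"
  shows "factors_through C (Comp C f w) (Comp C f w')"
proof -
  obtain a where a: "a \<in> hom C (Dom C w) (Dom C w')" "Comp C w' a = w"
    using assms(1) unfolding factors_through_def by blast
  then have a_arr: "a \<in> Arr C" "Cod C a = Dom C w'" "Dom C a = Dom C w"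
    unfolding hom_def by auto
  have "Comp C (Comp C f w') a = Comp C f w"
    using Comp_assoc[OF a_arr(1) assms(2,3) a_arr(2) assms(4)] a(2) by simp
  moreover have w: "w \<in> Arr C" "Dom C w = Dom C a" "Cod C w = Dom C f"
    using Comp_in_Arr[OF a_arr(1) assms(2) a_arr(2)] Dom_Comp[OF a_arr(1) assms(2) a_arr(2)]
      Cod_Comp[OF a_arr(1) assms(2) a_arr(2)] a(2) assms(4) by auto
  moreover have "Dom C (Comp C f w) = Dom C a" "Dom C (Comp C f w') = Cod C a"
    using w a_arr assms(2-4) by (simp_all add: Dom_Comp)
  ultimately show ?thesis
    unfolding factors_through_def hom_def using a_arr assms(2-4) by (auto simp: Comp_in_Arr)
qed

lemma Comp_triv_objs:
  "f \<in> hom C X Y \<Longrightarrow> w \<in> triv_objs C W T X \<Longrightarrow> Comp C f w \<in> triv_objs C W T Y"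
  unfolding triv_objs_def hom_def by (auto simp: Comp_in_Arr Dom_Comp Cod_Comp)

lemma Comp_triv_hom_rel:
  assumes f: "f \<in> hom C X Y" and "(w, w') \<in> triv_hom_rel C W T X"
  shows "(Comp C f w, Comp C f w') \<in> triv_hom_rel C W T Y"
proof -
  have w: "w \<in> triv_objs C W T X" "w' \<in> triv_objs C W T X" "factors_through C w w'"
    using assms(2) unfolding triv_hom_rel_iff by blast+
  then have "w' \<in> Arr C" "Cod C w' = Dom C f" "f \<in> Arr C"
    using f unfolding triv_objs_def hom_def by auto
  then show ?thesis
    unfolding triv_hom_rel_iff using Comp_triv_objs[OF f] Comp_factors_through w by blast
qed

end

locale model_cat =
  fixes C :: "('o, 'a) category" and W Cof Fib :: "'a set" and T :: 'o
  assumes model_category: "model_category C W Cof Fib"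
    and terminal: "is_terminal C T"

sublocale model_cat \<subseteq> cat
  using model_category unfolding model_category_def by unfold_locales blast

context model_cat
begin

lemma W_subset_Arr: "W \<subseteq> Arr C"
  and Fib_subset_Arr: "Fib \<subseteq> Arr C"
  using model_category unfolding model_category_def by auto

lemma W_Comp: "f \<in> W \<Longrightarrow> g \<in> W \<Longrightarrow> Cod C f = Dom C g \<Longrightarrow> Comp C g f \<in> W"
  using model_category unfolding model_category_def by simp

lemma W_cancel_right:
  assumes "f \<in> W" "g \<in> Arr C" "Cod C f = Dom C g" "Comp C g f \<in> W"
  shows "g \<in> W"
proof -
  have "\<forall>f\<in>Arr C. \<forall>g\<in>Arr C. Cod C f = Dom C g \<longrightarrow> f \<in> W \<and> Comp C g f \<in> W \<longrightarrow> g \<in> W"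
    using model_category unfolding model_category_def by blast
  then show ?thesis using assms W_subset_Arr by blast
qed

lemma pullback_exists:
  "g \<in> Arr C \<Longrightarrow> f \<in> Arr C \<Longrightarrow> Cod C g = Cod C f \<Longrightarrow> \<exists>q p. is_pullback C q p g f"
  using model_category unfolding model_category_def has_finite_limits_def by blast

lemma factorization_trivial_cofibration_fibration:
  "a \<in> Arr C \<Longrightarrow> \<exists>j p. j \<in> Cof \<inter> W \<and> p \<in> Fib \<and> Cod C j = Dom C p \<and> a = Comp C p j"
  using model_category unfolding model_category_def by blast

lemma trivial_cofibration_llp: "j \<in> Cof \<inter> W \<Longrightarrow> p \<in> Fib \<Longrightarrow> has_llp C j p"
  using model_category unfolding model_category_def by blast

lemma hom_to_terminal_exists: "A \<in> Obj C \<Longrightarrow> \<exists>t. t \<in> hom C A T"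
  and hom_to_terminal_unique: "A \<in> Obj C \<Longrightarrow> t \<in> hom C A T \<Longrightarrow> t' \<in> hom C A T \<Longrightarrow> t = t'"
  using terminal unfolding is_terminal_def by blast+

abbreviation contractible :: "'o \<Rightarrow> bool" where
  "contractible V \<equiv> \<forall>t\<in>hom C V T. t \<in> W"

lemma contractible_Dom:
  assumes v: "v \<in> W" and "contractible (Cod C v)"
  shows "contractible (Dom C v)"
proof
  fix t assume t: "t \<in> hom C (Dom C v) T"
  have "v \<in> Arr C" using v W_subset_Arr by blast
  then obtain t' where t': "t' \<in> hom C (Cod C v) T"
    using hom_to_terminal_exists cod_in_Obj by blast
  then have "Comp C t' v \<in> hom C (Dom C v) T"
    using Comp_in_hom \<open>v \<in> Arr C\<close> unfolding hom_def by auto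
  then have "t = Comp C t' v"
    using hom_to_terminal_unique t dom_in_Obj \<open>v \<in> Arr C\<close> by blast
  then show "t \<in> W" using W_Comp v assms(2) t' unfolding hom_def by auto
qed

lemma contractible_Cod:
  assumes v: "v \<in> W" and "contractible (Dom C v)"
  shows "contractible (Cod C v)"
proof
  fix t assume t: "t \<in> hom C (Cod C v) T"
  have "v \<in> Arr C" using v W_subset_Arr by blast
  then have "Comp C t v \<in> hom C (Dom C v) T"
    using Comp_in_hom t unfolding hom_def by auto
  then show "t \<in> W"
    using W_cancel_right[OF v] assms(2) t unfolding hom_def by auto
qed

definition fibrant_replacement :: "'a \<Rightarrow> 'a \<Rightarrow> 'a \<Rightarrow> bool" where
  "fibrant_replacement u j p \<longleftrightarrow> j \<in> Cof \<inter> W \<and> p \<in> Fib \<and> Cod C j = Dom C p \<and> u = Comp C p j"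

lemma fibrant_replacement_exists: "u \<in> Arr C \<Longrightarrow> \<exists>j p. fibrant_replacement u j p"
  unfolding fibrant_replacement_def by (rule factorization_trivial_cofibration_fibration)

lemma fibrant_replacement_factors_through:
  "fibrant_replacement u j p \<Longrightarrow> factors_through C u p"
  unfolding fibrant_replacement_def
  using factors_through_Comp W_subset_Arr Fib_subset_Arr by blast

lemma fibrant_replacement_triv_objs:
  assumes u: "u \<in> triv_objs C W T Y" and "fibrant_replacement u j p"
  shows "p \<in> triv_objs C W T Y"
proof -
  have jp: "j \<in> W" "j \<in> Arr C" "p \<in> Arr C" "Cod C j = Dom C p" "u = Comp C p j"
    using assms(2) W_subset_Arr Fib_subset_Arr unfolding fibrant_replacement_def by auto
  then have "Dom C j = Dom C u" "Cod C p = Y"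
    using u unfolding triv_objs_def by (auto simp: Dom_Comp Cod_Comp)
  then show ?thesis
    using contractible_Cod[of j] jp u unfolding triv_objs_def by auto
qed

lemma llp_factors_through:
  assumes j: "j \<in> Cof \<inter> W" and p: "p \<in> Fib"
    and q: "q \<in> Arr C" "Cod C j = Dom C q" "Cod C q = Cod C p"
    and "factors_through C (Comp C q j) p"
  shows "factors_through C q p"
proof -
  have "j \<in> Arr C" using j W_subset_Arr by blast
  obtain b where b: "b \<in> hom C (Dom C j) (Dom C p)" "Comp C p b = Comp C q j"
    using assms(6) \<open>j \<in> Arr C\<close> q unfolding factors_through_def by (auto simp: Dom_Comp)
  have "q \<in> hom C (Cod C j) (Cod C p)" using q unfolding hom_def by auto
  then obtain h where "h \<in> hom C (Cod C j) (Dom C p)" "Comp C p h = q"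
    using trivial_cofibration_llp[OF j p] b unfolding has_llp_def by blast
  then show ?thesis using q unfolding factors_through_def by auto
qed

lemma fibrant_replacement_factors_through_mono:
  assumes r: "fibrant_replacement u j p" and r': "fibrant_replacement u' j' p'"
    and "factors_through C u u'"
  shows "factors_through C p p'"
proof -
  have arr: "p \<in> Arr C" "p' \<in> Arr C" "j \<in> Arr C" "j' \<in> Arr C"
    using r r' W_subset_Arr Fib_subset_Arr unfolding fibrant_replacement_def by auto
  have u_p': "factors_through C u p'"
    using factors_through_trans[OF assms(3) fibrant_replacement_factors_through[OF r'] arr(2)] .
  moreover have "Cod C p = Cod C p'"
    using factors_through_Cod[OF u_p' arr(2)] r arr unfolding fibrant_replacement_def
    by (auto simp: Cod_Comp)
  ultimately show ?thesis
    using llp_factors_through[of j p' p] r r' arr unfolding fibrant_replacement_def by auto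
qed

end

definition (in model_cat) lies_over :: "'a \<Rightarrow> 'a \<Rightarrow> 'a \<Rightarrow> bool" where
  "lies_over f w u \<longleftrightarrow> (\<exists>j p. fibrant_replacement u j p \<and> factors_through C (Comp C f w) p)"

context model_cat
begin

lemma lies_over_Comp:
  assumes f: "f \<in> hom C X Y" and w: "w \<in> triv_objs C W T X"
  shows "lies_over f w (Comp C f w)"
proof -
  have "Comp C f w \<in> Arr C" using Comp_triv_objs[OF f w] unfolding triv_objs_def by blast
  then show ?thesis
    unfolding lies_over_def
    using fibrant_replacement_exists fibrant_replacement_factors_through by blast
qed

lemma lies_over_conn_rel:
  assumes f: "f \<in> hom C X Y" and w: "w \<in> triv_objs C W T X"
    and u: "u \<in> triv_objs C W T Y" and "lies_over f w u"
  shows "(Comp C f w, u) \<in> conn_rel C W T Y"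
proof -
  obtain j p where r: "fibrant_replacement u j p" and fw_p: "factors_through C (Comp C f w) p"
    using assms(4) unfolding lies_over_def by blast
  have p: "p \<in> triv_objs C W T Y" using fibrant_replacement_triv_objs[OF u r] .
  have "(Comp C f w, p) \<in> triv_hom_rel C W T Y" "(u, p) \<in> triv_hom_rel C W T Y"
    using Comp_triv_objs[OF f w] u p fw_p fibrant_replacement_factors_through[OF r]
    unfolding triv_hom_rel_iff by blast+
  then show ?thesis unfolding conn_rel_def by (blast intro: rtrancl_into_rtrancl)
qed

lemma lies_over_triv_hom_rel:
  assumes "(u, u') \<in> triv_hom_rel C W T Y" and "lies_over f w u"
  shows "lies_over f w u'"
proof -
  obtain j p where r: "fibrant_replacement u j p" and fw_p: "factors_through C (Comp C f w) p"
    using assms(2) unfolding lies_over_def by blast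
  have "u' \<in> Arr C" using assms(1) unfolding triv_hom_rel_def triv_objs_def by blast
  then obtain j' p' where r': "fibrant_replacement u' j' p'"
    using fibrant_replacement_exists by blast
  have "factors_through C p p'"
    using fibrant_replacement_factors_through_mono[OF r r'] assms(1)
    unfolding triv_hom_rel_iff by blast
  moreover have "p' \<in> Arr C" using r' Fib_subset_Arr unfolding fibrant_replacement_def by blast
  ultimately show ?thesis
    using factors_through_trans[OF fw_p] r' unfolding lies_over_def by blast
qed

end

locale right_proper_model_cat = model_cat +
  assumes W_base_change: "is_pullback C p' q g p \<Longrightarrow> p \<in> Fib \<Longrightarrow> g \<in> W \<Longrightarrow> q \<in> W"
begin

lemma pullback_triv_objs:
  assumes f: "f \<in> hom C X Y" "f \<in> W" and p: "p \<in> Fib" "p \<in> triv_objs C W T Y"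
  obtains x where "x \<in> triv_objs C W T X" "factors_through C (Comp C f x) p"
    and "\<And>w. w \<in> triv_objs C W T X \<Longrightarrow> factors_through C (Comp C f w) p \<Longrightarrow>
           (w, x) \<in> triv_hom_rel C W T X"
proof -
  have f_arr: "f \<in> Arr C" "Dom C f = X" "Cod C f = Y" using f unfolding hom_def by auto
  have p_arr: "p \<in> Arr C" "Cod C p = Y" using p unfolding triv_objs_def by auto
  obtain x v where pb: "is_pullback C x v f p"
    using pullback_exists f_arr p_arr by metis
  have "v \<in> W" using W_base_change[OF pb p(1) f(2)] .
  have sq: "x \<in> Arr C" "v \<in> Arr C" "Dom C x = Dom C v" "Cod C x = X" "Cod C v = Dom C p"
    "Comp C f x = Comp C p v"
    using pb f_arr unfolding is_pullback_def comm_square_def by auto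
  have x: "x \<in> triv_objs C W T X"
    using contractible_Dom[OF \<open>v \<in> W\<close>] sq p(2) unfolding triv_objs_def by auto
  moreover have "factors_through C (Comp C f x) p"
  proof -
    have "v \<in> hom C (Dom C (Comp C f x)) (Dom C p)"
      using sq f_arr Dom_Comp[of x f] unfolding hom_def by simp
    then show ?thesis unfolding factors_through_def using sq(6) by metis
  qed
  moreover have "(w, x) \<in> triv_hom_rel C W T X"
    if w: "w \<in> triv_objs C W T X" and fw_p: "factors_through C (Comp C f w) p" for w
  proof -
    obtain b where b: "b \<in> hom C (Dom C w) (Dom C p)" "Comp C p b = Comp C f w"
      using fw_p w f_arr unfolding factors_through_def triv_objs_def by (auto simp: Dom_Comp)
    then have "comm_square C w b f p"
      using w f_arr p_arr unfolding comm_square_def triv_objs_def hom_def by auto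
    then have "factors_through C w x"
      using pb unfolding is_pullback_def factors_through_def by blast
    then show ?thesis using w x unfolding triv_hom_rel_iff by blast
  qed
  ultimately show ?thesis using that by blast
qed

lemma lies_over_exists:
  assumes f: "f \<in> hom C X Y" "f \<in> W" and u: "u \<in> triv_objs C W T Y"
  shows "\<exists>w\<in>triv_objs C W T X. lies_over f w u"
proof -
  obtain j p where r: "fibrant_replacement u j p"
    using fibrant_replacement_exists u unfolding triv_objs_def by blast
  moreover have "p \<in> Fib" using r unfolding fibrant_replacement_def by blast
  moreover note fibrant_replacement_triv_objs[OF u r]
  ultimately show ?thesis
    using pullback_triv_objs[OF f] unfolding lies_over_def by metis
qed

lemma lies_over_connected:
  assumes f: "f \<in> hom C X Y" "f \<in> W"
    and w: "w \<in> triv_objs C W T X" and w': "w' \<in> triv_objs C W T X"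
    and u: "u \<in> triv_objs C W T Y"
    and over: "lies_over f w u" and over': "lies_over f w' u"
  shows "(w, w') \<in> conn_rel C W T X"
proof -
  obtain j p where r: "fibrant_replacement u j p" and fw_p: "factors_through C (Comp C f w) p"
    using over unfolding lies_over_def by blast
  have p: "p \<in> Fib" "p \<in> triv_objs C W T Y"
    using r fibrant_replacement_triv_objs[OF u r] unfolding fibrant_replacement_def by auto
  obtain j' p' where r': "fibrant_replacement u j' p'"
    and fw'_p': "factors_through C (Comp C f w') p'"
    using over' unfolding lies_over_def by blast
  have "u \<in> Arr C" using u unfolding triv_objs_def by blast
  then have "factors_through C p' p"
    using fibrant_replacement_factors_through_mono[OF r' r] factors_through_refl by blast
  then have fw'_p: "factors_through C (Comp C f w') p"
    using factors_through_trans[OF fw'_p'] p Fib_subset_Arr by blast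
  obtain x where "(w, x) \<in> triv_hom_rel C W T X" "(w', x) \<in> triv_hom_rel C W T X"
    using pullback_triv_objs[OF f p] w w' fw_p fw'_p by metis
  then show ?thesis unfolding conn_rel_def by (blast intro: rtrancl_into_rtrancl)
qed

end

theorem mainTheorem13:
  fixes C :: "('o, 'a) category" and W Cof Fib :: "'a set" and T X Y :: 'o and f :: 'a
  assumes "right_proper C W Cof Fib"
    and "is_terminal C T"
    and "f \<in> hom C X Y"
    and "f \<in> W"
  shows "bij_betw (pi0_push C W T Y f) (pi0_triv C W T X) (pi0_triv C W T Y)"
proof -
  interpret right_proper_model_cat C W Cof Fib T
    using assms(1,2) unfolding right_proper_def by unfold_locales blast+
  note f = assms(3,4)
  show ?thesis
    unfolding pi0_push_def pi0_triv_def conn_rel_def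
    by (rule bij_betw_zigzag_components[OF triv_hom_rel_subset
          image_subsetI[OF Comp_triv_objs[OF f(1)]] Comp_triv_hom_rel[OF f(1)]
          lies_over_Comp[OF f(1)] lies_over_exists[OF f] lies_over_conn_rel[OF f(1), unfolded conn_rel_def]
          lies_over_connected[OF f, unfolded conn_rel_def] lies_over_triv_hom_rel])
qed

end
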